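(* Let $(A,\vee,\perp,0)$ be a quasi-orthomodular nearsemilattice. Then for every $p \in A$ the initial segment $[0,p] = \{x \in A : x \le p\}$ is an orthomodular lattice (with the induced order), and the joins and meets in $[0,p]$ agree with the corresponding joins and meets existing in $A$.
   Context: A nearsemilattice is a poset $A$ with least element $0$ in which any two elements having a common upper bound have a join; $x \vee y$ is the (partial) join, and we say $x \vee y$ is defined iff $x,y$ have a common upper bound. An orthogonality on a poset with least element $0$ is a binary relation $\perp$ such that: (i) $x \perp y$ implies $y \perp x$; (ii) $x \le y$ and $y \perp z$ imply $x \perp z$; (iii) $x \perp 0$ for all $x$. A quasi-orthomodular nearsemilattice is a nearsemilattice with an orthogonality $\perp$ such that: (a) if $x \perp y$ then $x \vee y$ is defined; (b) if $x \le y$ then $y = x \vee z$ for some $z$ with $x \perp z$; (c) if $x \perp y$, $x \perp z$ and $y \le x \vee z$, then $y \le z$. An orthomodular lattice is a bounded lattice with an orthocomplementation $x \mapsto x^-$ (an order-reversing involution with $x \vee x^- = 1$) such that, for the orthogonality $x \perp y$ iff $y \le x^-$, whenever $x \le y$ there is $z$ with $x \perp z$ and $y = x \vee z$. *)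

theory Defs
  imports Main
begin

text \<open>The poset A is a type of class order_bot; its least element 0 is bot.
  Joins and meets are taken relative to a subset S with the induced order.\<close>

definition is_join_in :: "'a::order set \<Rightarrow> 'a \<Rightarrow> 'a \<Rightarrow> 'a \<Rightarrow> bool" where
  "is_join_in S x y j \<longleftrightarrow> j \<in> S \<and> x \<le> j \<and> y \<le> j \<and>
     (\<forall>u\<in>S. x \<le> u \<and> y \<le> u \<longrightarrow> j \<le> u)"

definition is_meet_in :: "'a::order set \<Rightarrow> 'a \<Rightarrow> 'a \<Rightarrow> 'a \<Rightarrow> bool" where
  "is_meet_in S x y m \<longleftrightarrow> m \<in> S \<and> m \<le> x \<and> m \<le> y \<and>
     (\<forall>l\<in>S. l \<le> x \<and> l \<le> y \<longrightarrow> l \<le> m)"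

definition nearsemilattice :: "'a::order_bot itself \<Rightarrow> bool" where
  "nearsemilattice _ \<longleftrightarrow>
     (\<forall>x y :: 'a. (\<exists>u. x \<le> u \<and> y \<le> u) \<longrightarrow> (\<exists>j. is_join_in UNIV x y j))"

definition orthogonality :: "('a::order_bot \<Rightarrow> 'a \<Rightarrow> bool) \<Rightarrow> bool" where
  "orthogonality orth \<longleftrightarrow>
     (\<forall>x y. orth x y \<longrightarrow> orth y x) \<and>
     (\<forall>x y z. x \<le> y \<and> orth y z \<longrightarrow> orth x z) \<and>
     (\<forall>x. orth x bot)"

definition quasi_orthomodular_nearsemilattice :: "('a::order_bot \<Rightarrow> 'a \<Rightarrow> bool) \<Rightarrow> bool" where
  "quasi_orthomodular_nearsemilattice orth \<longleftrightarrow>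
     nearsemilattice TYPE('a) \<and> orthogonality orth \<and>
     (\<forall>x y. orth x y \<longrightarrow> (\<exists>j. is_join_in UNIV x y j)) \<and>
     (\<forall>x y. x \<le> y \<longrightarrow> (\<exists>z. orth x z \<and> is_join_in UNIV x z y)) \<and>
     (\<forall>x y z. orth x y \<and> orth x z \<and> (\<exists>j. is_join_in UNIV x z j \<and> y \<le> j) \<longrightarrow> y \<le> z)"

definition orthocomplementation_on :: "'a::order set \<Rightarrow> ('a \<Rightarrow> 'a) \<Rightarrow> 'a \<Rightarrow> bool" where
  "orthocomplementation_on S c one \<longleftrightarrow>
     (\<forall>x\<in>S. c x \<in> S) \<and>
     (\<forall>x\<in>S. \<forall>y\<in>S. x \<le> y \<longrightarrow> c y \<le> c x) \<and>
     (\<forall>x\<in>S. c (c x) = x) \<and>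
     (\<forall>x\<in>S. is_join_in S x (c x) one)"

text \<open>S with the induced order is an orthomodular lattice: a bounded lattice with an
  orthocomplementation c such that, for x orth z iff z <= c x, whenever x <= y there is
  z with x orth z and y = x join z.\<close>
definition orthomodular_lattice_on :: "'a::order set \<Rightarrow> bool" where
  "orthomodular_lattice_on S \<longleftrightarrow>
     (\<exists>zero one c. zero \<in> S \<and> one \<in> S \<and> (\<forall>x\<in>S. zero \<le> x \<and> x \<le> one) \<and>
        (\<forall>x\<in>S. \<forall>y\<in>S. (\<exists>j. is_join_in S x y j) \<and> (\<exists>m. is_meet_in S x y m)) \<and>
        orthocomplementation_on S c one \<and>
        (\<forall>x\<in>S. \<forall>y\<in>S. x \<le> y \<longrightarrow> (\<exists>z\<in>S. z \<le> c x \<and> is_join_in S x z y)))"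

end

theory Submission
  imports Defs
begin

text \<open>For x \<le> p the decomposition axiom gives an orthogonal z with x \<or> z = p, and the
  cancellation axiom makes it unique; this is the orthocomplement of x in [0,p], and
  x \<perp> y holds exactly when y lies below it. Meets in [0,p] then exist by De Morgan, as the
  complement of the join of the complements. Since [0,p] is a down-set containing the joins
  of its elements, its joins and meets are those of A.\<close>

lemma is_join_in_commute: "is_join_in S x y j \<longleftrightarrow> is_join_in S y x j"
  unfolding is_join_in_def by auto

lemma is_join_in_atMost_iff:
  assumes "is_join_in UNIV x y j'" and "x \<le> p" and "y \<le> p"
  shows "is_join_in {x. x \<le> p} x y j \<longleftrightarrow> is_join_in UNIV x y j"
proof
  assume j: "is_join_in {x. x \<le> p} x y j"
  have "j' \<le> p" using assms by (simp add: is_join_in_def)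
  with j assms(1) have "j \<le> j'" "j' \<le> j"
    unfolding is_join_in_def by simp_all
  then have "j = j'" by (rule order.antisym)
  with assms(1) show "is_join_in UNIV x y j" by simp
next
  assume "is_join_in UNIV x y j"
  with assms(2,3) show "is_join_in {x. x \<le> p} x y j"
    unfolding is_join_in_def by auto
qed

lemma is_meet_in_atMost_iff:
  assumes "x \<le> p"
  shows "is_meet_in {x. x \<le> p} x y m \<longleftrightarrow> is_meet_in UNIV x y m"
  using assms unfolding is_meet_in_def by (auto intro: order_trans)

text \<open>Only the axioms the argument needs.\<close>

locale quasi_orthomodular =
  fixes orth :: "'a::order_bot \<Rightarrow> 'a \<Rightarrow> bool"
  assumes join_exists: "x \<le> u \<Longrightarrow> y \<le> u \<Longrightarrow> \<exists>j. is_join_in UNIV x y j"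
    and orth_sym: "orth x y \<Longrightarrow> orth y x"
    and orth_downward: "x \<le> y \<Longrightarrow> orth y z \<Longrightarrow> orth x z"
    and orth_decompose: "x \<le> y \<Longrightarrow> \<exists>z. orth x z \<and> is_join_in UNIV x z y"
    and orth_cancel: "orth x y \<Longrightarrow> orth x z \<Longrightarrow> is_join_in UNIV x z j \<Longrightarrow> y \<le> j \<Longrightarrow> y \<le> z"

lemma quasi_orthomodular_nearsemilattice_imp_quasi_orthomodular:
  assumes "quasi_orthomodular_nearsemilattice orth"
  shows "quasi_orthomodular orth"
proof -
  have "nearsemilattice TYPE('a)" "orthogonality orth"
    and "\<forall>x y. x \<le> y \<longrightarrow> (\<exists>z. orth x z \<and> is_join_in UNIV x z y)"
    and "\<forall>x y z. orth x y \<and> orth x z \<and> (\<exists>j. is_join_in UNIV x z j \<and> y \<le> j) \<longrightarrow> y \<le> z"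
    using assms unfolding quasi_orthomodular_nearsemilattice_def by simp_all
  then show ?thesis
    unfolding nearsemilattice_def orthogonality_def quasi_orthomodular_def by meson
qed

context quasi_orthomodular
begin

lemma join_atMost_iff:
  fixes x y p :: 'a
  assumes "x \<le> p" and "y \<le> p"
  shows "is_join_in {x. x \<le> p} x y j \<longleftrightarrow> is_join_in UNIV x y j"
proof -
  obtain j' where "is_join_in UNIV x y j'" using join_exists[OF assms] ..
  then show ?thesis using is_join_in_atMost_iff assms by blast
qed

lemma orth_complement_unique:
  assumes "orth x z" "is_join_in UNIV x z p" and "orth x z'" "is_join_in UNIV x z' p"
  shows "z' = z"
proof (rule order.antisym)
  have "z \<le> p" "z' \<le> p" using assms by (simp_all add: is_join_in_def)
  then show "z' \<le> z" "z \<le> z'"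
    using orth_cancel[OF assms(3,1,2)] orth_cancel[OF assms(1,3,4)] by simp_all
qed

definition rel_compl :: "'a \<Rightarrow> 'a \<Rightarrow> 'a" where
  "rel_compl p x = (THE z. orth x z \<and> is_join_in UNIV x z p)"

lemma rel_compl:
  assumes "x \<le> p"
  shows "orth x (rel_compl p x)" and "is_join_in UNIV x (rel_compl p x) p"
proof -
  obtain z where z: "orth x z" "is_join_in UNIV x z p"
    using orth_decompose[OF assms] by blast
  have "rel_compl p x = z"
    unfolding rel_compl_def
    by (rule the_equality) (use z orth_complement_unique in blast)+
  with z show "orth x (rel_compl p x)" "is_join_in UNIV x (rel_compl p x) p" by simp_all
qed

lemma rel_compl_unique:
  assumes "x \<le> p" "orth x z" "is_join_in UNIV x z p"
  shows "rel_compl p x = z"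
  by (rule orth_complement_unique[OF assms(2,3) rel_compl[OF assms(1)]])

lemma rel_compl_le: "x \<le> p \<Longrightarrow> rel_compl p x \<le> p"
  using rel_compl(2) unfolding is_join_in_def by blast

lemma orth_iff_le_rel_compl:
  assumes "x \<le> p" and "y \<le> p"
  shows "orth x y \<longleftrightarrow> y \<le> rel_compl p x"
proof
  assume "orth x y"
  then show "y \<le> rel_compl p x"
    using orth_cancel[OF _ rel_compl[OF assms(1)] assms(2)] by blast
next
  assume "y \<le> rel_compl p x"
  moreover have "orth (rel_compl p x) x" using rel_compl(1)[OF assms(1)] by (rule orth_sym)
  ultimately have "orth y x" by (rule orth_downward)
  then show "orth x y" by (rule orth_sym)
qed

lemma rel_compl_rel_compl:
  assumes "x \<le> p"
  shows "rel_compl p (rel_compl p x) = x"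
proof (rule rel_compl_unique)
  show "rel_compl p x \<le> p" using assms by (rule rel_compl_le)
  show "orth (rel_compl p x) x" using rel_compl(1)[OF assms] by (rule orth_sym)
  show "is_join_in UNIV (rel_compl p x) x p"
    using rel_compl(2)[OF assms] by (subst is_join_in_commute)
qed

lemma rel_compl_antimono:
  assumes "x \<le> y" and "y \<le> p"
  shows "rel_compl p y \<le> rel_compl p x"
proof -
  have "orth x (rel_compl p y)"
    using orth_downward[OF assms(1) rel_compl(1)[OF assms(2)]] .
  moreover have "x \<le> p" using assms by (rule order_trans)
  ultimately show ?thesis
    using orth_iff_le_rel_compl rel_compl_le[OF assms(2)] by simp
qed

lemma rel_compl_join_is_meet:
  assumes x: "x \<le> p" and y: "y \<le> p"
    and j: "is_join_in UNIV (rel_compl p x) (rel_compl p y) j"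
  shows "is_meet_in {x. x \<le> p} x y (rel_compl p j)"
proof -
  have cx: "rel_compl p x \<le> j" and cy: "rel_compl p y \<le> j"
    and least: "\<And>u. rel_compl p x \<le> u \<Longrightarrow> rel_compl p y \<le> u \<Longrightarrow> j \<le> u"
    using j unfolding is_join_in_def by auto
  have jp: "j \<le> p" using least rel_compl_le x y by blast
  have "l \<le> rel_compl p j" if lp: "l \<le> p" and "l \<le> x" "l \<le> y" for l
  proof -
    have "j \<le> rel_compl p l"
      using least rel_compl_antimono x y that by blast
    then have "rel_compl p (rel_compl p l) \<le> rel_compl p j"
      using rel_compl_antimono rel_compl_le[OF lp] by blast
    then show ?thesis by (simp add: rel_compl_rel_compl lp)
  qed
  moreover have "rel_compl p j \<le> x"
    using rel_compl_antimono[OF cx jp] by (simp add: rel_compl_rel_compl x)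
  moreover have "rel_compl p j \<le> y"
    using rel_compl_antimono[OF cy jp] by (simp add: rel_compl_rel_compl y)
  ultimately show ?thesis
    using rel_compl_le[OF jp] unfolding is_meet_in_def by simp
qed

lemma orthocomplementation_on_rel_compl:
  "orthocomplementation_on {x. x \<le> p} (rel_compl p) p"
  unfolding orthocomplementation_on_def
proof (intro conjI ballI impI)
  fix x assume "x \<in> {x. x \<le> p}"
  then have x: "x \<le> p" by simp
  show "rel_compl p x \<in> {x. x \<le> p}" using rel_compl_le[OF x] by simp
  show "rel_compl p (rel_compl p x) = x" using x by (rule rel_compl_rel_compl)
  show "is_join_in {x. x \<le> p} x (rel_compl p x) p"
    using rel_compl(2)[OF x] join_atMost_iff[OF x rel_compl_le[OF x]] by simp
next
  fix x y assume "x \<in> {x. x \<le> p}" "y \<in> {x. x \<le> p}" "x \<le> y"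
  then show "rel_compl p y \<le> rel_compl p x" by (simp add: rel_compl_antimono)
qed

lemma orthomodular_law_atMost:
  assumes "x \<le> y" and y: "y \<le> p"
  shows "\<exists>z\<in>{x. x \<le> p}. z \<le> rel_compl p x \<and> is_join_in {x. x \<le> p} x z y"
proof -
  obtain z where z: "orth x z" "is_join_in UNIV x z y"
    using orth_decompose[OF assms(1)] by blast
  have x: "x \<le> p" using assms by (rule order_trans)
  have "z \<le> y" using z(2) by (simp add: is_join_in_def)
  then have zp: "z \<le> p" using y by (rule order_trans)
  have "z \<le> rel_compl p x" using orth_iff_le_rel_compl[OF x zp] z(1) by simp
  moreover have "is_join_in {x. x \<le> p} x z y" using join_atMost_iff[OF x zp] z(2) by simp
  ultimately show ?thesis using zp by blast
qed

lemma orthomodular_lattice_on_atMost: "orthomodular_lattice_on {x. x \<le> (p::'a)}"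
proof -
  have "\<exists>j. is_join_in {x. x \<le> p} x y j" if x: "x \<le> p" and y: "y \<le> p" for x y
    using join_exists[OF x y] join_atMost_iff[OF x y] by blast
  moreover have "\<exists>m. is_meet_in {x. x \<le> p} x y m" if x: "x \<le> p" and y: "y \<le> p" for x y
    using join_exists[OF rel_compl_le[OF x] rel_compl_le[OF y]] rel_compl_join_is_meet[OF x y]
    by blast
  ultimately show ?thesis
    unfolding orthomodular_lattice_on_def
    using orthocomplementation_on_rel_compl orthomodular_law_atMost
    by (intro exI[of _ bot] exI[of _ p] exI[of _ "rel_compl p"] conjI) simp_all
qed

end

theorem theorem2:
  fixes orth :: "'a::order_bot \<Rightarrow> 'a \<Rightarrow> bool" and p :: 'a
  assumes "quasi_orthomodular_nearsemilattice orth"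
  shows "orthomodular_lattice_on {x. x \<le> p} \<and>
    (\<forall>x y. x \<le> p \<longrightarrow> y \<le> p \<longrightarrow>
       (\<forall>j. is_join_in {x. x \<le> p} x y j \<longleftrightarrow> is_join_in UNIV x y j) \<and>
       (\<forall>m. is_meet_in {x. x \<le> p} x y m \<longleftrightarrow> is_meet_in UNIV x y m))"
proof -
  interpret quasi_orthomodular orth
    using assms by (rule quasi_orthomodular_nearsemilattice_imp_quasi_orthomodular)
  show ?thesis
    using orthomodular_lattice_on_atMost join_atMost_iff is_meet_in_atMost_iff by blast
qed

end
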